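(* Let $(Q,P)$ be a weakly quasi-lattice ordered group and let $\Lambda$ be a $P$-graph with $\mathrm{FA}(\Lambda)\neq\emptyset$. Let $\mathcal{X}(\Lambda)*P=\{(x,m)\in\mathcal{X}(\Lambda)\times P: x\cap\Lambda^m\neq\emptyset\}$ and define $T:\mathcal{X}(\Lambda)*P\to\mathcal{X}(\Lambda)$ by $T(x,m)=x\cdot m:=\{\mu\in\Lambda: x(0,m)\mu\in x\}$, where $x(0,m)$ is the unique element of $x\cap\Lambda^m$. Then $T$ is well defined with values in $\mathcal{X}(\Lambda)$ and $(\mathcal{X}(\Lambda),P,T)$ is a semigroup action: (S1) for all $x\in\mathcal{X}(\Lambda)$, $(x,e)\in\mathcal{X}(\Lambda)*P$ and $x\cdot e=x$; (S2) for all $x\in\mathcal{X}(\Lambda)$ and $m,n\in P$, $(x,mn)\in\mathcal{X}(\Lambda)*P$ if and only if $(x,m)\in\mathcal{X}(\Lambda)*P$ and $(x\cdot m,n)\in\mathcal{X}(\Lambda)*P$, in which case $(x\cdot m)\cdot n=x\cdot(mn)$.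
   Context: $(Q,P)$ weakly quasi-lattice ordered: $Q$ a discrete group, $P\subseteq Q$ a subsemigroup containing the identity $e$ with $P\cap P^{-1}=\{e\}$, and, with $p\le r$ meaning $pq=r$ for some $q\in P$, any two elements of $P$ with a common upper bound have a least common upper bound. A $P$-graph is a countable small category $\Lambda$ (range/source $r,s$) with a functor $d:\Lambda\to P$ with unique factorisation (if $d(\lambda)=pq$ there are unique $\mu,\nu$ with $\lambda=\mu\nu$, $d(\mu)=p$, $d(\nu)=q$). Write $\Lambda^m=d^{-1}(m)$, $\lambda\Lambda=\{\lambda\mu: s(\lambda)=r(\mu)\}$, $\mu\preceq\lambda$ iff $\lambda\in\mu\Lambda$. $\mathrm{FA}(\Lambda)$ is the set of $\lambda$ such that for all $\mu\in\lambda\Lambda,\nu\in\Lambda$ there is a finite $J\subseteq\Lambda$ with $\mu\Lambda\cap\nu\Lambda=\bigcup_{\kappa\in J}\kappa\Lambda$. A filter is a nonempty hereditary and directed subset of $\Lambda$ (w.r.t. $\preceq$); for a filter $x$, $d|_x$ is injective. The path space is $\mathcal{X}(\Lambda)=\{x: x\text{ a filter}, x\cap\mathrm{FA}(\Lambda)\neq\emptyset\}$. *)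

theory Defs
  imports Main "HOL-Library.Countable_Set"
begin

text \<open>The group Q is a type of class group_add (written additively, not necessarily
commutative; identity e = 0, product pq = p + q). P is a subset of Q.\<close>

definition P_le :: "'q::group_add set \<Rightarrow> 'q \<Rightarrow> 'q \<Rightarrow> bool" where
  "P_le P p r \<longleftrightarrow> (\<exists>q\<in>P. p + q = r)"

definition wqlo :: "'q::group_add set \<Rightarrow> bool" where
  "wqlo P \<longleftrightarrow>
     0 \<in> P \<and> (\<forall>p\<in>P. \<forall>q\<in>P. p + q \<in> P) \<and> P \<inter> uminus ` P = {0} \<and>
     (\<forall>p\<in>P. \<forall>q\<in>P. (\<exists>r\<in>P. P_le P p r \<and> P_le P q r) \<longrightarrow>
        (\<exists>s\<in>P. P_le P p s \<and> P_le P q s \<and> (\<forall>r\<in>P. P_le P p r \<and> P_le P q r \<longrightarrow> P_le P s r)))"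

record ('o, 'a, 'q) pgraph =
  Obj :: "'o set"
  Mor :: "'a set"
  rng :: "'a \<Rightarrow> 'o"
  src :: "'a \<Rightarrow> 'o"
  cmp :: "'a \<Rightarrow> 'a \<Rightarrow> 'a"
  idm :: "'o \<Rightarrow> 'a"
  deg :: "'a \<Rightarrow> 'q"

definition small_category :: "('o, 'a, 'q) pgraph \<Rightarrow> bool" where
  "small_category G \<longleftrightarrow>
     (\<forall>v\<in>Obj G. idm G v \<in> Mor G \<and> rng G (idm G v) = v \<and> src G (idm G v) = v) \<and>
     (\<forall>l\<in>Mor G. rng G l \<in> Obj G \<and> src G l \<in> Obj G) \<and>
     (\<forall>l\<in>Mor G. \<forall>m\<in>Mor G. src G l = rng G m \<longrightarrow>
        cmp G l m \<in> Mor G \<and> rng G (cmp G l m) = rng G l \<and> src G (cmp G l m) = src G m) \<and>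
     (\<forall>l\<in>Mor G. cmp G (idm G (rng G l)) l = l \<and> cmp G l (idm G (src G l)) = l) \<and>
     (\<forall>l\<in>Mor G. \<forall>m\<in>Mor G. \<forall>n\<in>Mor G. src G l = rng G m \<longrightarrow> src G m = rng G n \<longrightarrow>
        cmp G (cmp G l m) n = cmp G l (cmp G m n))"

definition is_P_graph :: "'q::group_add set \<Rightarrow> ('o, 'a, 'q) pgraph \<Rightarrow> bool" where
  "is_P_graph P G \<longleftrightarrow>
     small_category G \<and> countable (Obj G) \<and> countable (Mor G) \<and>
     (\<forall>l\<in>Mor G. deg G l \<in> P) \<and>
     (\<forall>v\<in>Obj G. deg G (idm G v) = 0) \<and>
     (\<forall>l\<in>Mor G. \<forall>m\<in>Mor G. src G l = rng G m \<longrightarrow> deg G (cmp G l m) = deg G l + deg G m) \<and>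
     (\<forall>l\<in>Mor G. \<forall>p\<in>P. \<forall>q\<in>P. deg G l = p + q \<longrightarrow>
        (\<exists>!(m, n). m \<in> Mor G \<and> n \<in> Mor G \<and> src G m = rng G n \<and>
                   l = cmp G m n \<and> deg G m = p \<and> deg G n = q))"

definition Lam_deg :: "('o, 'a, 'q) pgraph \<Rightarrow> 'q \<Rightarrow> 'a set" where
  "Lam_deg G m = {l \<in> Mor G. deg G l = m}"

definition ext_set :: "('o, 'a, 'q) pgraph \<Rightarrow> 'a \<Rightarrow> 'a set" where
  "ext_set G l = {cmp G l m | m. m \<in> Mor G \<and> src G l = rng G m}"

definition preceq :: "('o, 'a, 'q) pgraph \<Rightarrow> 'a \<Rightarrow> 'a \<Rightarrow> bool" where
  "preceq G m l \<longleftrightarrow> m \<in> Mor G \<and> l \<in> ext_set G m"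

definition FA :: "('o, 'a, 'q) pgraph \<Rightarrow> 'a set" where
  "FA G = {l \<in> Mor G. \<forall>m\<in>ext_set G l. \<forall>n\<in>Mor G.
            \<exists>J. finite J \<and> J \<subseteq> Mor G \<and> ext_set G m \<inter> ext_set G n = (\<Union>k\<in>J. ext_set G k)}"

definition is_filter :: "('o, 'a, 'q) pgraph \<Rightarrow> 'a set \<Rightarrow> bool" where
  "is_filter G x \<longleftrightarrow> x \<subseteq> Mor G \<and> x \<noteq> {} \<and>
     (\<forall>l\<in>x. \<forall>m. preceq G m l \<longrightarrow> m \<in> x) \<and>
     (\<forall>l\<in>x. \<forall>m\<in>x. \<exists>n\<in>x. preceq G l n \<and> preceq G m n)"

definition path_space :: "('o, 'a, 'q) pgraph \<Rightarrow> 'a set set" where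
  "path_space G = {x. is_filter G x \<and> x \<inter> FA G \<noteq> {}}"

definition XP :: "'q set \<Rightarrow> ('o, 'a, 'q) pgraph \<Rightarrow> ('a set \<times> 'q) set" where
  "XP P G = {(x, m). x \<in> path_space G \<and> m \<in> P \<and> x \<inter> Lam_deg G m \<noteq> {}}"

definition seg0 :: "('o, 'a, 'q) pgraph \<Rightarrow> 'a set \<Rightarrow> 'q \<Rightarrow> 'a" where
  "seg0 G x m = (THE l. l \<in> x \<and> deg G l = m)"

definition shift :: "('o, 'a, 'q) pgraph \<Rightarrow> 'a set \<Rightarrow> 'q \<Rightarrow> 'a set" where
  "shift G x m = {u \<in> Mor G. src G (seg0 G x m) = rng G u \<and> cmp G (seg0 G x m) u \<in> x}"

end

theory Submission
  imports Defs
begin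

text \<open>For \<open>l \<in> x\<close> the shifted path \<open>x \<cdot> d(l)\<close> is the left quotient
\<open>l\<^sup>-\<^sup>1x = {u. l u \<in> x}\<close>. Unique factorisation makes composition with \<open>l\<close> injective;
this gives directedness of \<open>l\<^sup>-\<^sup>1x\<close> and lets a finite cover witnessing
\<open>l k \<in> FA(\<Lambda>)\<close> be pulled back to one witnessing \<open>k \<in> FA(\<Lambda>)\<close>. As \<open>FA(\<Lambda>)\<close> is also
closed under extension and \<open>x\<close> is directed, \<open>l\<^sup>-\<^sup>1x\<close> meets \<open>FA(\<Lambda>)\<close> whenever \<open>x\<close> does.
The action laws then come from associativity, \<open>k\<^sup>-\<^sup>1(l\<^sup>-\<^sup>1x) = (l k)\<^sup>-\<^sup>1x\<close>, and from
the identity morphism at the common range of \<open>x\<close> lying in \<open>x\<close>.\<close>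

definition left_quotient :: "('o, 'a, 'q) pgraph \<Rightarrow> 'a \<Rightarrow> 'a set \<Rightarrow> 'a set" where
  "left_quotient G l x = {u \<in> Mor G. src G l = rng G u \<and> cmp G l u \<in> x}"

definition finitely_aligned :: "('o, 'a, 'q) pgraph \<Rightarrow> 'a \<Rightarrow> 'a \<Rightarrow> bool" where
  "finitely_aligned G \<mu> \<nu> \<longleftrightarrow>
     (\<exists>J. finite J \<and> J \<subseteq> Mor G \<and> ext_set G \<mu> \<inter> ext_set G \<nu> = (\<Union>\<kappa>\<in>J. ext_set G \<kappa>))"

lemma FA_iff:
  "l \<in> FA G \<longleftrightarrow> l \<in> Mor G \<and> (\<forall>\<mu>\<in>ext_set G l. \<forall>\<nu>\<in>Mor G. finitely_aligned G \<mu> \<nu>)"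
  by (simp add: FA_def finitely_aligned_def)

locale category =
  fixes G :: "('o, 'a, 'q) pgraph"
  assumes small_category: "small_category G"
begin

lemma
  assumes "l \<in> Mor G" "m \<in> Mor G" "src G l = rng G m"
  shows cmp_in_Mor [simp]: "cmp G l m \<in> Mor G"
    and rng_cmp [simp]: "rng G (cmp G l m) = rng G l"
    and src_cmp [simp]: "src G (cmp G l m) = src G m"
  using small_category assms unfolding small_category_def by blast+

lemma cmp_assoc:
  "\<lbrakk>l \<in> Mor G; m \<in> Mor G; n \<in> Mor G; src G l = rng G m; src G m = rng G n\<rbrakk>
   \<Longrightarrow> cmp G (cmp G l m) n = cmp G l (cmp G m n)"
  using small_category unfolding small_category_def by blast

lemma
  assumes "v \<in> Obj G"
  shows idm_in_Mor [simp]: "idm G v \<in> Mor G"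
    and rng_idm [simp]: "rng G (idm G v) = v"
    and src_idm [simp]: "src G (idm G v) = v"
  using small_category assms unfolding small_category_def by blast+

lemma
  assumes "l \<in> Mor G"
  shows rng_in_Obj [simp]: "rng G l \<in> Obj G"
    and src_in_Obj [simp]: "src G l \<in> Obj G"
    and cmp_idm_left [simp]: "cmp G (idm G (rng G l)) l = l"
    and cmp_idm_right [simp]: "cmp G l (idm G (src G l)) = l"
  using small_category assms unfolding small_category_def by blast+

lemma mem_ext_set_iff:
  "y \<in> ext_set G l \<longleftrightarrow> (\<exists>c\<in>Mor G. src G l = rng G c \<and> y = cmp G l c)"
  by (auto simp: ext_set_def)

lemma preceq_iff:
  "preceq G m l \<longleftrightarrow> m \<in> Mor G \<and> (\<exists>c\<in>Mor G. src G m = rng G c \<and> l = cmp G m c)"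
  by (auto simp: preceq_def mem_ext_set_iff)

lemma self_in_ext_set: "l \<in> Mor G \<Longrightarrow> l \<in> ext_set G l"
  unfolding mem_ext_set_iff by (metis cmp_idm_right idm_in_Mor rng_idm src_in_Obj)

lemma ext_set_subset: "l \<in> Mor G \<Longrightarrow> ext_set G l \<subseteq> {u \<in> Mor G. rng G u = rng G l}"
  by (auto simp: mem_ext_set_iff)

lemma ext_set_cmp:
  assumes l: "l \<in> Mor G" and u: "u \<in> Mor G" and lu: "src G l = rng G u"
  shows "ext_set G (cmp G l u) = cmp G l ` ext_set G u"
proof (intro equalityI subsetI)
  fix y assume "y \<in> ext_set G (cmp G l u)"
  then obtain c where c: "c \<in> Mor G" "src G u = rng G c" and y: "y = cmp G (cmp G l u) c"
    using assms by (auto simp: mem_ext_set_iff)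
  then have "y = cmp G l (cmp G u c)" using cmp_assoc assms by simp
  then show "y \<in> cmp G l ` ext_set G u"
    using c by (intro image_eqI[of _ _ "cmp G u c"]) (auto simp: mem_ext_set_iff)
next
  fix y assume "y \<in> cmp G l ` ext_set G u"
  then obtain c where c: "c \<in> Mor G" "src G u = rng G c" and y: "y = cmp G l (cmp G u c)"
    by (auto simp: mem_ext_set_iff)
  then have "y = cmp G (cmp G l u) c" using cmp_assoc assms by simp
  then show "y \<in> ext_set G (cmp G l u)" using c assms by (auto simp: mem_ext_set_iff)
qed

lemma UN_ext_set_cmp:
  assumes l: "l \<in> Mor G" and K: "K \<subseteq> {u \<in> Mor G. rng G u = src G l}"
  shows "(\<Union>\<kappa>\<in>K. ext_set G (cmp G l \<kappa>)) = cmp G l ` (\<Union>\<kappa>\<in>K. ext_set G \<kappa>)"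
proof -
  have "(\<Union>\<kappa>\<in>K. ext_set G (cmp G l \<kappa>)) = (\<Union>\<kappa>\<in>K. cmp G l ` ext_set G \<kappa>)"
  proof (rule SUP_cong[OF refl])
    fix \<kappa> assume "\<kappa> \<in> K"
    then show "ext_set G (cmp G l \<kappa>) = cmp G l ` ext_set G \<kappa>"
      using ext_set_cmp[OF l, of \<kappa>] K by auto
  qed
  then show ?thesis by (simp only: image_UN)
qed

lemma ext_set_subset_if_preceq:
  assumes "preceq G l n"
  shows "ext_set G n \<subseteq> ext_set G l"
proof -
  obtain c where l: "l \<in> Mor G" and c: "c \<in> Mor G" and lc: "src G l = rng G c"
    and n: "n = cmp G l c"
    using assms unfolding preceq_iff by blast
  have "ext_set G n = cmp G l ` ext_set G c" using ext_set_cmp[OF l c lc] n by simp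
  also have "\<dots> \<subseteq> ext_set G l"
  proof
    fix y assume "y \<in> cmp G l ` ext_set G c"
    then obtain w where "w \<in> ext_set G c" and y: "y = cmp G l w" by blast
    then have "w \<in> Mor G" "src G l = rng G w" using ext_set_subset[OF c] lc by auto
    then show "y \<in> ext_set G l" unfolding mem_ext_set_iff y by blast
  qed
  finally show ?thesis .
qed

lemma FA_upward_closed:
  assumes l: "l \<in> FA G" and ln: "preceq G l n"
  shows "n \<in> FA G"
proof -
  have "n \<in> Mor G" using ln unfolding preceq_iff by auto
  then show ?thesis using l ext_set_subset_if_preceq[OF ln] unfolding FA_iff by blast
qed

lemma finitely_aligned_if_rng_neq:
  assumes "\<mu> \<in> Mor G" "\<nu> \<in> Mor G" "rng G \<mu> \<noteq> rng G \<nu>"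
  shows "finitely_aligned G \<mu> \<nu>"
proof -
  have "y \<notin> ext_set G \<nu>" if "y \<in> ext_set G \<mu>" for y
  proof
    assume "y \<in> ext_set G \<nu>"
    then have "rng G y = rng G \<nu>" using subsetD[OF ext_set_subset[OF assms(2)]] by simp
    moreover have "rng G y = rng G \<mu>" using subsetD[OF ext_set_subset[OF assms(1)] that] by simp
    ultimately show False using assms(3) by simp
  qed
  then show ?thesis unfolding finitely_aligned_def by (intro exI[of _ "{}"]) auto
qed

lemma filter_subset_Mor: "is_filter G x \<Longrightarrow> x \<subseteq> Mor G"
  unfolding is_filter_def by blast

lemma filter_down_closed: "is_filter G x \<Longrightarrow> l \<in> x \<Longrightarrow> preceq G m l \<Longrightarrow> m \<in> x"
  unfolding is_filter_def by blast

lemma filter_directed: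
  "is_filter G x \<Longrightarrow> l \<in> x \<Longrightarrow> l' \<in> x \<Longrightarrow> \<exists>n\<in>x. preceq G l n \<and> preceq G l' n"
  unfolding is_filter_def by blast

lemma filter_rng_eq:
  assumes "is_filter G x" "l \<in> x" "l' \<in> x"
  shows "rng G l = rng G l'"
  using filter_directed[OF assms] filter_subset_Mor[OF assms(1)] assms(2,3)
  by (auto simp: preceq_iff) (metis rng_cmp)

lemma idm_in_filter:
  assumes "is_filter G x" "l \<in> x"
  shows "idm G (rng G l) \<in> x"
proof -
  have "l \<in> Mor G" using assms filter_subset_Mor by blast
  then have "preceq G (idm G (rng G l)) l"
    unfolding preceq_iff by (metis idm_in_Mor rng_in_Obj cmp_idm_left src_idm)
  then show ?thesis using filter_down_closed assms by blast
qed

lemma left_quotient_idm: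
  assumes x: "is_filter G x" and l: "l \<in> x"
  shows "left_quotient G (idm G (rng G l)) x = x"
proof -
  have v: "rng G l \<in> Obj G" using filter_subset_Mor[OF x] l by auto
  have "u \<in> left_quotient G (idm G (rng G l)) x \<longleftrightarrow> u \<in> x" for u
  proof (cases "u \<in> Mor G \<and> rng G u = rng G l")
    case True
    then show ?thesis using v cmp_idm_left[of u] by (simp add: left_quotient_def)
  next
    case False
    then have "u \<notin> left_quotient G (idm G (rng G l)) x" using v by (auto simp: left_quotient_def)
    moreover have "u \<notin> x" using False filter_subset_Mor[OF x] filter_rng_eq[OF x _ l] by auto
    ultimately show ?thesis by simp
  qed
  then show ?thesis by blast
qed

lemma left_quotient_cmp:
  assumes a: "a \<in> Mor G" and b: "b \<in> Mor G" and ab: "src G a = rng G b"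
  shows "left_quotient G b (left_quotient G a x) = left_quotient G (cmp G a b) x"
proof -
  have "u \<in> left_quotient G b (left_quotient G a x) \<longleftrightarrow> u \<in> left_quotient G (cmp G a b) x"
    for u
  proof (cases "u \<in> Mor G \<and> src G b = rng G u")
    case True
    then show ?thesis using a b ab cmp_assoc[OF a b _ ab] by (simp add: left_quotient_def)
  next
    case False
    then show ?thesis using a b ab by (auto simp: left_quotient_def)
  qed
  then show ?thesis by blast
qed

end

locale P_graph =
  fixes P :: "'q::group_add set" and G :: "('o, 'a, 'q) pgraph"
  assumes is_P_graph: "is_P_graph P G"

sublocale P_graph \<subseteq> category G
  using is_P_graph by unfold_locales (simp add: is_P_graph_def)

context P_graph
begin

lemma deg_in_P: "l \<in> Mor G \<Longrightarrow> deg G l \<in> P"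
  using is_P_graph unfolding is_P_graph_def by blast

lemma deg_idm [simp]: "v \<in> Obj G \<Longrightarrow> deg G (idm G v) = 0"
  using is_P_graph unfolding is_P_graph_def by blast

lemma deg_cmp [simp]:
  "\<lbrakk>l \<in> Mor G; m \<in> Mor G; src G l = rng G m\<rbrakk> \<Longrightarrow> deg G (cmp G l m) = deg G l + deg G m"
  using is_P_graph unfolding is_P_graph_def by blast

lemma factorisation_exists:
  assumes "l \<in> Mor G" "p \<in> P" "q \<in> P" "deg G l = p + q"
  obtains a b where "a \<in> Mor G" "b \<in> Mor G" "src G a = rng G b" "l = cmp G a b"
    "deg G a = p" "deg G b = q"
  using is_P_graph assms unfolding is_P_graph_def by blast

lemma factorisation_unique:
  assumes a: "a \<in> Mor G" and b: "b \<in> Mor G" and c: "c \<in> Mor G" and d: "d \<in> Mor G"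
    and ab: "src G a = rng G b" and cd: "src G c = rng G d"
    and eq: "cmp G a b = cmp G c d" and deg_ac: "deg G a = deg G c"
  shows "a = c \<and> b = d"
proof -
  have deg_bd: "deg G b = deg G d"
    using deg_cmp[OF a b ab] deg_cmp[OF c d cd] eq deg_ac by simp
  have "\<exists>!(m, n). m \<in> Mor G \<and> n \<in> Mor G \<and> src G m = rng G n \<and>
                   cmp G a b = cmp G m n \<and> deg G m = deg G a \<and> deg G n = deg G b"
    using is_P_graph a b ab deg_in_P[OF a] deg_in_P[OF b] unfolding is_P_graph_def by simp
  then obtain z where z: "\<And>y. (case y of (m, n) \<Rightarrow> m \<in> Mor G \<and> n \<in> Mor G \<and> src G m = rng G n \<and>
      cmp G a b = cmp G m n \<and> deg G m = deg G a \<and> deg G n = deg G b) \<Longrightarrow> y = z"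
    by (auto simp: Ex1_def)
  have "(a, b) = z" using z a b ab by auto
  moreover have "(c, d) = z" using z c d cd eq deg_ac deg_bd by auto
  ultimately show ?thesis by auto
qed

lemma cmp_left_cancel:
  "\<lbrakk>l \<in> Mor G; u \<in> Mor G; w \<in> Mor G; src G l = rng G u; src G l = rng G w; cmp G l u = cmp G l w\<rbrakk>
   \<Longrightarrow> u = w"
  using factorisation_unique by blast

lemma inj_on_cmp: "l \<in> Mor G \<Longrightarrow> inj_on (cmp G l) {u \<in> Mor G. rng G u = src G l}"
  unfolding inj_on_def using cmp_left_cancel by (metis (mono_tags, lifting) mem_Collect_eq)

lemma inj_on_deg_filter:
  assumes x: "is_filter G x"
  shows "inj_on (deg G) x"
proof (rule inj_onI)
  fix l l' assume l: "l \<in> x" and l': "l' \<in> x" and deg: "deg G l = deg G l'"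
  obtain n where "n \<in> x" "preceq G l n" "preceq G l' n" using filter_directed[OF x l l'] by blast
  then obtain c c' where "l \<in> Mor G" "c \<in> Mor G" "src G l = rng G c"
    "l' \<in> Mor G" "c' \<in> Mor G" "src G l' = rng G c'" "cmp G l c = cmp G l' c'"
    unfolding preceq_iff by metis
  then show "l = l'" using factorisation_unique deg by blast
qed

lemma seg0_filter: "is_filter G x \<Longrightarrow> l \<in> x \<Longrightarrow> seg0 G x (deg G l) = l"
  unfolding seg0_def using inj_on_deg_filter by (auto intro!: the_equality dest: inj_onD)

lemma shift_filter: "is_filter G x \<Longrightarrow> l \<in> x \<Longrightarrow> shift G x (deg G l) = left_quotient G l x"
  unfolding shift_def left_quotient_def by (simp add: seg0_filter)

lemma is_filter_left_quotient:
  assumes x: "is_filter G x" and l: "l \<in> x"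
  shows "is_filter G (left_quotient G l x)"
proof -
  let ?y = "left_quotient G l x"
  have lM: "l \<in> Mor G" using filter_subset_Mor[OF x] l by blast
  have "idm G (src G l) \<in> ?y" using lM l by (simp add: left_quotient_def)
  moreover have "w \<in> ?y" if u: "u \<in> ?y" and wu: "preceq G w u" for u w
  proof -
    obtain c where w: "w \<in> Mor G" and c: "c \<in> Mor G" "src G w = rng G c" and u_eq: "u = cmp G w c"
      using wu unfolding preceq_iff by blast
    have lw: "src G l = rng G w" using u u_eq w c by (simp add: left_quotient_def)
    have "cmp G l u = cmp G (cmp G l w) c" using cmp_assoc[OF lM w c(1) lw c(2)] u_eq by simp
    then have "preceq G (cmp G l w) (cmp G l u)" using lM w c lw unfolding preceq_iff by auto
    then have "cmp G l w \<in> x" using filter_down_closed[OF x] u by (auto simp: left_quotient_def)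
    then show ?thesis using w lw by (simp add: left_quotient_def)
  qed
  moreover have "\<exists>k\<in>?y. preceq G u k \<and> preceq G u' k" if u: "u \<in> ?y" and u': "u' \<in> ?y" for u u'
  proof -
    have uM: "u \<in> Mor G" "src G l = rng G u" "cmp G l u \<in> x"
      and uM': "u' \<in> Mor G" "src G l = rng G u'" "cmp G l u' \<in> x"
      using u u' by (auto simp: left_quotient_def)
    obtain n where n: "n \<in> x" "preceq G (cmp G l u) n" "preceq G (cmp G l u') n"
      using filter_directed[OF x uM(3) uM'(3)] by blast
    then obtain c c' where c: "c \<in> Mor G" "src G u = rng G c" "n = cmp G (cmp G l u) c"
      and c': "c' \<in> Mor G" "src G u' = rng G c'" "n = cmp G (cmp G l u') c'"
      using lM uM uM' unfolding preceq_iff by auto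
    have n_eq: "n = cmp G l (cmp G u c)" "n = cmp G l (cmp G u' c')"
      using cmp_assoc lM uM uM' c c' by auto
    then have k_eq: "cmp G u c = cmp G u' c'"
      using cmp_left_cancel[OF lM] uM uM' c c' by simp
    have "cmp G u c \<in> ?y" using uM c n n_eq by (simp add: left_quotient_def)
    moreover have "preceq G u (cmp G u c)" "preceq G u' (cmp G u c)"
      using uM c uM' c' k_eq unfolding preceq_iff by auto
    ultimately show ?thesis by blast
  qed
  moreover have "?y \<subseteq> Mor G" by (auto simp: left_quotient_def)
  ultimately show ?thesis unfolding is_filter_def by blast
qed

lemma finitely_aligned_cancel_left:
  assumes l: "l \<in> Mor G" and \<mu>: "\<mu> \<in> Mor G" and \<nu>: "\<nu> \<in> Mor G"
    and l\<mu>: "src G l = rng G \<mu>" and l\<nu>: "src G l = rng G \<nu>"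
    and aligned: "finitely_aligned G (cmp G l \<mu>) (cmp G l \<nu>)"
  shows "finitely_aligned G \<mu> \<nu>"
proof -
  let ?D = "{u \<in> Mor G. rng G u = src G l}"
  have inj: "inj_on (cmp G l) ?D" using inj_on_cmp[OF l] .
  have ext_\<mu>: "ext_set G \<mu> \<subseteq> ?D" and ext_\<nu>: "ext_set G \<nu> \<subseteq> ?D"
    using ext_set_subset[OF \<mu>] ext_set_subset[OF \<nu>] l\<mu> l\<nu> by auto
  obtain J where J: "finite J" "J \<subseteq> Mor G"
    and cover: "ext_set G (cmp G l \<mu>) \<inter> ext_set G (cmp G l \<nu>) = (\<Union>\<kappa>\<in>J. ext_set G \<kappa>)"
    using aligned unfolding finitely_aligned_def by blast
  have "J \<subseteq> cmp G l ` ?D"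
  proof
    fix \<kappa> assume "\<kappa> \<in> J"
    then have "\<kappa> \<in> ext_set G (cmp G l \<mu>)" using cover self_in_ext_set[of \<kappa>] J(2) by blast
    then show "\<kappa> \<in> cmp G l ` ?D" unfolding ext_set_cmp[OF l \<mu> l\<mu>] using ext_\<mu> by blast
  qed
  then obtain J' where J': "J' \<subseteq> ?D" and J_eq: "J = cmp G l ` J'"
    unfolding subset_image_iff by blast
  have "finite J'" using finite_imageD[OF J(1)[unfolded J_eq] inj_on_subset[OF inj J']] .
  have ext_J': "(\<Union>\<kappa>\<in>J'. ext_set G \<kappa>) \<subseteq> ?D"
  proof (rule UN_least)
    fix \<kappa> assume "\<kappa> \<in> J'"
    then have "\<kappa> \<in> Mor G" "rng G \<kappa> = src G l" using J' by auto
    then show "ext_set G \<kappa> \<subseteq> ?D" using ext_set_subset[of \<kappa>] by auto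
  qed
  have "cmp G l ` (ext_set G \<mu> \<inter> ext_set G \<nu>) = cmp G l ` ext_set G \<mu> \<inter> cmp G l ` ext_set G \<nu>"
    using inj_on_image_Int[OF inj ext_\<mu> ext_\<nu>] .
  also have "\<dots> = (\<Union>\<kappa>\<in>J'. ext_set G (cmp G l \<kappa>))"
    using ext_set_cmp[OF l \<mu> l\<mu>] ext_set_cmp[OF l \<nu> l\<nu>] cover J_eq by simp
  also have "\<dots> = cmp G l ` (\<Union>\<kappa>\<in>J'. ext_set G \<kappa>)" using UN_ext_set_cmp[OF l J'] .
  finally have "ext_set G \<mu> \<inter> ext_set G \<nu> = (\<Union>\<kappa>\<in>J'. ext_set G \<kappa>)"
    using inj_on_image_eq_iff[OF inj le_infI1[OF ext_\<mu>] ext_J'] by simp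
  then show ?thesis using \<open>finite J'\<close> J' unfolding finitely_aligned_def by blast
qed

lemma FA_cancel_left:
  assumes l: "l \<in> Mor G" and k: "k \<in> Mor G" and lk: "src G l = rng G k"
    and FA_lk: "cmp G l k \<in> FA G"
  shows "k \<in> FA G"
  unfolding FA_iff
proof (intro conjI ballI k)
  fix \<mu> \<nu> assume \<mu>: "\<mu> \<in> ext_set G k" and \<nu>: "\<nu> \<in> Mor G"
  have \<mu>M: "\<mu> \<in> Mor G" and l\<mu>: "src G l = rng G \<mu>"
    using subsetD[OF ext_set_subset[OF k] \<mu>] lk by auto
  show "finitely_aligned G \<mu> \<nu>"
  proof (cases "src G l = rng G \<nu>")
    case True
    have "cmp G l \<mu> \<in> ext_set G (cmp G l k)" using ext_set_cmp[OF l k lk] \<mu> by simp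
    then have "finitely_aligned G (cmp G l \<mu>) (cmp G l \<nu>)"
      using FA_lk cmp_in_Mor[OF l \<nu> True] unfolding FA_iff by blast
    then show ?thesis by (rule finitely_aligned_cancel_left[OF l \<mu>M \<nu> l\<mu> True])
  next
    case False
    then show ?thesis using finitely_aligned_if_rng_neq[OF \<mu>M \<nu>] l\<mu> by simp
  qed
qed

lemma left_quotient_in_path_space:
  assumes x: "x \<in> path_space G" and l: "l \<in> x"
  shows "left_quotient G l x \<in> path_space G"
proof -
  have filter: "is_filter G x" using x by (simp add: path_space_def)
  obtain l\<^sub>0 where "l\<^sub>0 \<in> x" "l\<^sub>0 \<in> FA G" using x by (auto simp: path_space_def)
  then obtain n where n: "n \<in> x" "n \<in> FA G" "preceq G l n"
    using filter_directed[OF filter _ l] FA_upward_closed by blast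
  then obtain c where "c \<in> Mor G" "src G l = rng G c" "n = cmp G l c"
    unfolding preceq_iff by blast
  then have "c \<in> left_quotient G l x \<inter> FA G"
    using FA_cancel_left n(1,2) l filter_subset_Mor[OF filter]
    by (auto simp: left_quotient_def)
  then show ?thesis
    using is_filter_left_quotient[OF filter l] by (auto simp: path_space_def)
qed

lemma mem_XP_iff: "(x, m) \<in> XP P G \<longleftrightarrow> x \<in> path_space G \<and> (\<exists>l\<in>x. deg G l = m)"
  using filter_subset_Mor deg_in_P by (fastforce simp: XP_def path_space_def Lam_deg_def)

lemma XP_ex1_Lam_deg:
  assumes "(x, m) \<in> XP P G"
  shows "\<exists>!l. l \<in> x \<and> l \<in> Lam_deg G m"
proof -
  have filter: "is_filter G x" using assms by (simp add: XP_def path_space_def)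
  obtain l where "l \<in> x" "deg G l = m" using assms by (auto simp: mem_XP_iff)
  then show ?thesis
    using filter_subset_Mor[OF filter] inj_on_deg_filter[OF filter]
    by (auto simp: Lam_deg_def dest: inj_onD)
qed

lemma shift_in_path_space:
  assumes "(x, m) \<in> XP P G"
  shows "shift G x m \<in> path_space G"
proof -
  obtain l where x: "x \<in> path_space G" and l: "l \<in> x" "deg G l = m"
    using assms unfolding mem_XP_iff by blast
  have "is_filter G x" using x by (simp add: path_space_def)
  then show ?thesis using shift_filter left_quotient_in_path_space[OF x l(1)] l by metis
qed

lemma XP_zero_shift_zero:
  assumes x: "x \<in> path_space G"
  shows "(x, 0) \<in> XP P G \<and> shift G x 0 = x"
proof -
  have filter: "is_filter G x" using x by (simp add: path_space_def)
  then obtain l where l: "l \<in> x" unfolding is_filter_def by blast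
  let ?i = "idm G (rng G l)"
  have i: "?i \<in> x" using idm_in_filter[OF filter l] .
  have deg_i: "deg G ?i = 0" using filter_subset_Mor[OF filter] l by auto
  have "(x, 0) \<in> XP P G" using x i deg_i by (auto simp: mem_XP_iff)
  moreover have "shift G x 0 = x"
    using shift_filter[OF filter i] left_quotient_idm[OF filter l] deg_i by simp
  ultimately show ?thesis ..
qed

lemma XP_add_split:
  assumes mn: "(x, m + n) \<in> XP P G" and "m \<in> P" "n \<in> P"
  obtains a b where "a \<in> x" "deg G a = m" "b \<in> left_quotient G a x" "deg G b = n"
proof -
  obtain l where x: "x \<in> path_space G" and l: "l \<in> x" "deg G l = m + n"
    using mn unfolding mem_XP_iff by blast
  have filter: "is_filter G x" using x by (simp add: path_space_def)
  have "l \<in> Mor G" using filter_subset_Mor[OF filter] l by blast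
  then obtain a b where ab: "a \<in> Mor G" "b \<in> Mor G" "src G a = rng G b" "l = cmp G a b"
    "deg G a = m" "deg G b = n"
    using factorisation_exists l(2) assms(2,3) by metis
  then have "preceq G a l" unfolding preceq_iff by blast
  then have "a \<in> x" using filter_down_closed[OF filter l(1)] by blast
  moreover have "b \<in> left_quotient G a x" using ab l by (simp add: left_quotient_def)
  ultimately show ?thesis using that ab by blast
qed

lemma XP_add_iff:
  assumes x: "x \<in> path_space G" and m: "m \<in> P" and n: "n \<in> P"
  shows "(x, m + n) \<in> XP P G \<longleftrightarrow> (x, m) \<in> XP P G \<and> (shift G x m, n) \<in> XP P G"
proof -
  have filter: "is_filter G x" using x by (simp add: path_space_def)
  show ?thesis
  proof
    assume "(x, m + n) \<in> XP P G"
    then obtain a b where a: "a \<in> x" "deg G a = m" and b: "b \<in> left_quotient G a x" "deg G b = n"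
      using XP_add_split m n by metis
    have "shift G x m = left_quotient G a x" using shift_filter[OF filter a(1)] a(2) by simp
    then show "(x, m) \<in> XP P G \<and> (shift G x m, n) \<in> XP P G"
      using a b x left_quotient_in_path_space[OF x a(1)] unfolding mem_XP_iff by auto
  next
    assume "(x, m) \<in> XP P G \<and> (shift G x m, n) \<in> XP P G"
    then obtain a b where a: "a \<in> x" "deg G a = m" and b: "b \<in> shift G x m" "deg G b = n"
      unfolding mem_XP_iff by blast
    have aM: "a \<in> Mor G" using filter_subset_Mor[OF filter] a(1) by blast
    have "b \<in> left_quotient G a x" using b(1) shift_filter[OF filter a(1)] a(2) by simp
    then have bM: "b \<in> Mor G" "src G a = rng G b" and ab: "cmp G a b \<in> x"
      unfolding left_quotient_def by auto
    have "deg G (cmp G a b) = m + n" using deg_cmp[OF aM bM] a(2) b(2) by simp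
    then show "(x, m + n) \<in> XP P G" using x ab unfolding mem_XP_iff by blast
  qed
qed

lemma shift_add:
  assumes mn: "(x, m + n) \<in> XP P G" and m: "m \<in> P" and n: "n \<in> P"
  shows "shift G (shift G x m) n = shift G x (m + n)"
proof -
  have filter: "is_filter G x" using mn by (simp add: XP_def path_space_def)
  obtain a b where a: "a \<in> x" "deg G a = m" and b: "b \<in> left_quotient G a x" "deg G b = n"
    using XP_add_split[OF mn m n] by metis
  have aM: "a \<in> Mor G" using filter_subset_Mor[OF filter] a(1) by blast
  have bM: "b \<in> Mor G" "src G a = rng G b" "cmp G a b \<in> x"
    using b(1) by (auto simp: left_quotient_def)
  have "shift G (shift G x m) n = left_quotient G b (left_quotient G a x)"
    using shift_filter[OF filter a(1)] shift_filter[OF is_filter_left_quotient[OF filter a(1)] b(1)]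
      a(2) b(2) by simp
  also have "\<dots> = left_quotient G (cmp G a b) x" using left_quotient_cmp[OF aM bM(1,2)] .
  also have "\<dots> = shift G x (m + n)"
    using shift_filter[OF filter bM(3)] aM bM a(2) b(2) by simp
  finally show ?thesis .
qed

end

theorem proposition5p9:
  fixes P :: "'q::group_add set" and G :: "('o, 'a, 'q) pgraph"
  assumes "wqlo P" and "is_P_graph P G" and "FA G \<noteq> {}"
  shows "(\<forall>(x, m)\<in>XP P G. (\<exists>!l. l \<in> x \<and> l \<in> Lam_deg G m) \<and> shift G x m \<in> path_space G)
       \<and> (\<forall>x\<in>path_space G. (x, 0) \<in> XP P G \<and> shift G x 0 = x)
       \<and> (\<forall>x\<in>path_space G. \<forall>m\<in>P. \<forall>n\<in>P.
            ((x, m + n) \<in> XP P G \<longleftrightarrow> (x, m) \<in> XP P G \<and> (shift G x m, n) \<in> XP P G) \<and>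
            ((x, m + n) \<in> XP P G \<longrightarrow> shift G (shift G x m) n = shift G x (m + n)))"
proof -
  interpret P_graph P G using assms(2) by unfold_locales
  have "\<forall>(x, m)\<in>XP P G. (\<exists>!l. l \<in> x \<and> l \<in> Lam_deg G m) \<and> shift G x m \<in> path_space G"
    using XP_ex1_Lam_deg shift_in_path_space by blast
  moreover have "\<forall>x\<in>path_space G. (x, 0) \<in> XP P G \<and> shift G x 0 = x"
    using XP_zero_shift_zero by blast
  moreover have "\<forall>x\<in>path_space G. \<forall>m\<in>P. \<forall>n\<in>P.
            ((x, m + n) \<in> XP P G \<longleftrightarrow> (x, m) \<in> XP P G \<and> (shift G x m, n) \<in> XP P G) \<and>
            ((x, m + n) \<in> XP P G \<longrightarrow> shift G (shift G x m) n = shift G x (m + n))"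
    using XP_add_iff shift_add by blast
  ultimately show ?thesis by blast
qed

end
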